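(* Assume (C1) and (C2). Then for every $x\in E$ and every stopping time $\tau$ with $\mathbb{E}^x\{\tau\}<\infty$, \[ \lim_{T\to\infty}\mathbb{E}^x\Big\{\int_0^{\tau\wedge T}f(X_s)\,ds+g(X_{\tau\wedge T})\Big\}=\mathbb{E}^x\Big\{\int_0^{\tau}f(X_s)\,ds+g(X_{\tau})\Big\}. \]
   Context: Let $(E,\rho)$ be a locally compact metric space with Borel $\sigma$-field, and let $(X_t)_{t\ge0}$ be a Markov process with right-continuous paths on a filtered space $(\Omega,\mathcal F,(\mathcal F_t))$, taking values in $E$; $\mathbb{P}^x$ denotes the law of the process started at $x$ and $\mathbb{E}^x$ the corresponding expectation. Stopping times are with respect to $(\mathcal F_t)$. Let $f:E\to\mathbb R$ be continuous and bounded and $g:E\to\mathbb R$ continuous (possibly unbounded). (C1) $\zeta^+:=\sup_{t\ge0}g^+(X_t)$ is $\mathbb{P}^x$-integrable for every $x$. (C2) For every $x$ and every family of events $A_T\in\mathcal F_T$, $T>0$: if $\lim_{T\to\infty}\mathbb{P}^x(A_T)=0$ then $\lim_{T\to\infty}\mathbb{E}^x\{\mathbf 1_{A_T}g^-(X_T)\}=0$. *)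

theory Defs
  imports "HOL-Analysis.Analysis" "HOL-Probability.Probability"
begin

definition filtered_space :: "'w measure \<Rightarrow> (real \<Rightarrow> 'w measure) \<Rightarrow> bool" where
  "filtered_space M F \<longleftrightarrow>
     (\<forall>t\<ge>0. space (F t) = space M \<and> sets (F t) \<subseteq> sets M) \<and>
     (\<forall>s t. 0 \<le> s \<longrightarrow> s \<le> t \<longrightarrow> sets (F s) \<subseteq> sets (F t))"

text \<open>The Markov property is stated in the usual form
  P^x(B \<inter> {X_{t+s} \<in> A}) = E^x[1_B P^{X_t}(X_s \<in> A)] for B \<in> F_t.\<close>
definition markov_process ::
  "'w measure \<Rightarrow> (real \<Rightarrow> 'w measure) \<Rightarrow> ('e::topological_space \<Rightarrow> 'w measure) \<Rightarrow> (real \<Rightarrow> 'w \<Rightarrow> 'e) \<Rightarrow> bool" where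
  "markov_process M F P X \<longleftrightarrow>
     filtered_space M F \<and>
     (\<forall>x. prob_space (P x) \<and> sets (P x) = sets M) \<and>
     (\<forall>t\<ge>0. X t \<in> measurable (F t) borel) \<and>
     (\<forall>\<omega>\<in>space M. \<forall>t\<ge>0. continuous (at_right t) (\<lambda>s. X s \<omega>)) \<and>
     (\<forall>x. AE \<omega> in P x. X 0 \<omega> = x) \<and>
     (\<forall>L\<in>sets M. (\<lambda>y. measure (P y) L) \<in> borel_measurable borel) \<and>
     (\<forall>x s t A B. 0 \<le> s \<longrightarrow> 0 \<le> t \<longrightarrow> A \<in> sets borel \<longrightarrow> B \<in> sets (F t) \<longrightarrow>
        measure (P x) (B \<inter> {\<omega>\<in>space M. X (t + s) \<omega> \<in> A}) =
        (LINT \<omega>:B|P x. measure (P (X t \<omega>)) {\<omega>'\<in>space M. X s \<omega>' \<in> A}))"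

definition stopping_time_wrt :: "'w measure \<Rightarrow> (real \<Rightarrow> 'w measure) \<Rightarrow> ('w \<Rightarrow> ennreal) \<Rightarrow> bool" where
  "stopping_time_wrt M F \<tau> \<longleftrightarrow>
     (\<forall>t\<ge>0. {\<omega>\<in>space M. \<tau> \<omega> \<le> ennreal t} \<in> sets (F t))"

definition stop_min :: "('w \<Rightarrow> ennreal) \<Rightarrow> real \<Rightarrow> 'w \<Rightarrow> real" where
  "stop_min \<tau> T \<omega> = enn2real (min (\<tau> \<omega>) (ennreal T))"

definition ext_expectation :: "'w measure \<Rightarrow> ('w \<Rightarrow> real) \<Rightarrow> ereal" where
  "ext_expectation M Y =
     enn2ereal (\<integral>\<^sup>+\<omega>. ennreal (Y \<omega>) \<partial>M) - enn2ereal (\<integral>\<^sup>+\<omega>. ennreal (- Y \<omega>) \<partial>M)"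

end

theory Submission
  imports Defs
begin

text \<open>Write \<open>Y\<^sub>T\<close> for the reward stopped at \<open>min \<tau> T\<close> and \<open>Y\<close> for the reward stopped at \<open>\<tau>\<close>;
  since \<open>\<tau>\<close> is integrable, it is a.s. finite and \<open>Y\<^sub>T = Y\<close> for all large \<open>T\<close>. The positive parts
  are dominated by \<open>K \<tau> + sup\<^sub>t g\<^sup>+(X\<^sub>t)\<close> (\<open>K\<close> a bound of \<open>|f|\<close>), which is integrable by (C1), so
  their expectations converge by dominated convergence. For the negative parts split at the
  event \<open>{\<tau> > T}\<close>: on \<open>{\<tau> \<le> T}\<close> we have \<open>Y\<^sub>T = Y\<close> and Fatou's lemma suffices, while on
  \<open>{\<tau> > T}\<close> we have \<open>Y\<^sub>T\<^sup>- \<le> K \<tau> + g\<^sup>-(X\<^sub>T)\<close>; the first term vanishes in the limit by dominated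
  convergence and the second by (C2), because \<open>{\<tau> > T} \<in> \<F>\<^sub>T\<close> and \<open>P(\<tau> > T) \<rightarrow> 0\<close>.\<close>

lemma nn_integral_dominated_convergence_at_top:
  fixes u :: "real \<Rightarrow> 'a \<Rightarrow> ennreal"
  assumes [measurable]: "\<And>T. u T \<in> borel_measurable M" "u' \<in> borel_measurable M" "w \<in> borel_measurable M"
    and bound: "\<And>T. AE x in M. u T x \<le> w x"
    and w: "(\<integral>\<^sup>+x. w x \<partial>M) < \<infinity>"
    and lim: "AE x in M. ((\<lambda>T. u T x) \<longlongrightarrow> u' x) at_top"
  shows "((\<lambda>T. \<integral>\<^sup>+x. u T x \<partial>M) \<longlongrightarrow> (\<integral>\<^sup>+x. u' x \<partial>M)) at_top"
proof (rule tendsto_at_topI_sequentially)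
  fix S :: "nat \<Rightarrow> real" assume S: "filterlim S at_top sequentially"
  show "(\<lambda>n. \<integral>\<^sup>+x. u (S n) x \<partial>M) \<longlonglongrightarrow> (\<integral>\<^sup>+x. u' x \<partial>M)"
    using lim by (intro nn_integral_dominated_convergence[OF _ _ _ bound w])
      (auto elim!: eventually_mono intro: filterlim_compose[OF _ S])
qed

lemma nn_integral_tendsto_at_top_of_le_limit:
  fixes u :: "real \<Rightarrow> 'a \<Rightarrow> ennreal"
  assumes [measurable]: "\<And>T. u T \<in> borel_measurable M" "u' \<in> borel_measurable M"
    and below: "\<And>T. AE x in M. u T x \<le> u' x"
    and lim: "AE x in M. ((\<lambda>T. u T x) \<longlongrightarrow> u' x) at_top"
  shows "((\<lambda>T. \<integral>\<^sup>+x. u T x \<partial>M) \<longlongrightarrow> (\<integral>\<^sup>+x. u' x \<partial>M)) at_top"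
proof (rule tendsto_at_topI_sequentially)
  \<comment> \<open>Fatou's lemma from below and monotonicity from above; no integrable majorant is needed.\<close>
  fix S :: "nat \<Rightarrow> real" assume S: "filterlim S at_top sequentially"
  have "AE x in M. (\<lambda>n. u (S n) x) \<longlonglongrightarrow> u' x"
    using lim by (auto elim!: eventually_mono intro: filterlim_compose[OF _ S])
  then have "(\<integral>\<^sup>+x. u' x \<partial>M) = (\<integral>\<^sup>+x. liminf (\<lambda>n. u (S n) x) \<partial>M)"
    by (intro nn_integral_cong_AE) (auto elim!: eventually_mono simp: lim_imp_Liminf)
  also have "\<dots> \<le> liminf (\<lambda>n. \<integral>\<^sup>+x. u (S n) x \<partial>M)"
    by (intro nn_integral_liminf) simp
  finally have "(\<integral>\<^sup>+x. u' x \<partial>M) \<le> liminf (\<lambda>n. \<integral>\<^sup>+x. u (S n) x \<partial>M)" .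
  moreover have "limsup (\<lambda>n. \<integral>\<^sup>+x. u (S n) x \<partial>M) \<le> (\<integral>\<^sup>+x. u' x \<partial>M)"
    by (intro Limsup_bounded always_eventually allI nn_integral_mono_AE below)
  moreover have "liminf (\<lambda>n. \<integral>\<^sup>+x. u (S n) x \<partial>M) \<le> limsup (\<lambda>n. \<integral>\<^sup>+x. u (S n) x \<partial>M)"
    by (rule Liminf_le_Limsup) simp
  ultimately show "(\<lambda>n. \<integral>\<^sup>+x. u (S n) x \<partial>M) \<longlonglongrightarrow> (\<integral>\<^sup>+x. u' x \<partial>M)"
    by (intro Liminf_eq_Limsup antisym) (auto intro: order_trans)
qed

definition dyadic_above :: "nat \<Rightarrow> real \<Rightarrow> real" where
  "dyadic_above n u = (real (nat \<lfloor>2^n * u\<rfloor>) + 1) / 2^n"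

lemma dyadic_above_tendsto:
  assumes "0 \<le> u"
  shows "filterlim (\<lambda>n. dyadic_above n u) (at_right u) sequentially"
proof -
  have above: "u < dyadic_above n u" and close: "dyadic_above n u \<le> u + (1/2)^n" for n
  proof -
    have "real (nat \<lfloor>2^n * u\<rfloor>) = of_int \<lfloor>2^n * u\<rfloor>"
      using assms by simp
    moreover have "2^n * u < of_int \<lfloor>2^n * u\<rfloor> + 1" "of_int \<lfloor>2^n * u\<rfloor> \<le> 2^n * u"
      by linarith+
    ultimately show "u < dyadic_above n u" "dyadic_above n u \<le> u + (1/2)^n"
      by (simp_all add: dyadic_above_def field_simps power_one_over)
  qed
  have "(\<lambda>n. u + (1/2::real)^n) \<longlonglongrightarrow> u + 0"
    by (intro tendsto_add tendsto_const LIMSEQ_realpow_zero) auto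
  then have "(\<lambda>n. dyadic_above n u) \<longlonglongrightarrow> u"
    unfolding add_0_right by (rule tendsto_sandwich[rotated 2, OF tendsto_const])
      (auto intro!: always_eventually less_imp_le[OF above] close)
  then show ?thesis
    using above by (auto simp: filterlim_at intro!: always_eventually less_imp_neq[THEN not_sym])
qed

lemma measurable_right_continuous_process:
  fixes X :: "real \<Rightarrow> 'w \<Rightarrow> 'e::metric_space"
  assumes X: "\<And>t. 0 \<le> t \<Longrightarrow> X t \<in> measurable M borel"
    and rc: "\<And>\<omega> t. \<omega> \<in> space M \<Longrightarrow> 0 \<le> t \<Longrightarrow> continuous (at_right t) (\<lambda>s. X s \<omega>)"
  shows "(\<lambda>p. X (max 0 (snd p)) (fst p)) \<in> measurable (M \<Otimes>\<^sub>M (borel :: real measure)) borel"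
proof (rule borel_measurable_LIMSEQ_metric)
  fix n
  have "(\<lambda>p. X ((real k + 1) / 2^n) (fst p)) \<in> measurable (M \<Otimes>\<^sub>M borel) borel" for k :: nat
    by (rule measurable_compose[OF measurable_fst X]) simp
  moreover have "(\<lambda>p. nat \<lfloor>(2::real)^n * max 0 (snd p :: real)\<rfloor>) \<in> measurable (M \<Otimes>\<^sub>M borel) (count_space UNIV)"
    by measurable
  ultimately show "(\<lambda>p. X (dyadic_above n (max 0 (snd p))) (fst p)) \<in> measurable (M \<Otimes>\<^sub>M borel) borel"
    unfolding dyadic_above_def by (rule measurable_compose_countable)
next
  fix p :: "'w \<times> real" assume "p \<in> space (M \<Otimes>\<^sub>M borel)"
  then have "fst p \<in> space M" by (auto simp: space_pair_measure)
  then have "((\<lambda>s. X s (fst p)) \<longlongrightarrow> X (max 0 (snd p)) (fst p)) (at_right (max 0 (snd p)))"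
    using rc by (simp add: continuous_within)
  then show "(\<lambda>n. X (dyadic_above n (max 0 (snd p))) (fst p)) \<longlonglongrightarrow> X (max 0 (snd p)) (fst p)"
    by (rule filterlim_compose[OF _ dyadic_above_tendsto]) simp
qed

lemma SUP_nonneg_Rats_right_continuous:
  fixes \<phi> :: "real \<Rightarrow> 'a::{complete_linorder, linorder_topology}"
  assumes rc: "\<And>t. 0 \<le> t \<Longrightarrow> continuous (at_right t) \<phi>"
  shows "(SUP t\<in>{0..}. \<phi> t) = (SUP t\<in>{0..} \<inter> \<rat>. \<phi> t)"
proof (rule antisym)
  show "(SUP t\<in>{0..}. \<phi> t) \<le> (SUP t\<in>{0..} \<inter> \<rat>. \<phi> t)"
  proof (rule SUP_least)
    fix t :: real assume t: "t \<in> {0..}"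
    let ?F = "at t within ({t<..} \<inter> \<rat>)"
    have "t islimpt ({t<..} \<inter> \<rat>)"
    proof (unfold islimpt_approachable_real, intro allI impI)
      fix e :: real assume "0 < e"
      then obtain r where "r \<in> \<rat>" "t < r" "r < t + e"
        using Rats_dense_in_real[of t "t + e"] by auto
      then show "\<exists>r\<in>{t<..} \<inter> \<rat>. r \<noteq> t \<and> \<bar>r - t\<bar> < e"
        by (intro bexI[of _ r]) auto
    qed
    then have "?F \<noteq> bot" by (simp add: trivial_limit_within)
    moreover have "(\<phi> \<longlongrightarrow> \<phi> t) ?F"
      using rc[of t] t by (auto simp: continuous_within intro: tendsto_within_subset)
    moreover have "\<forall>\<^sub>F s in ?F. \<phi> s \<le> (SUP t\<in>{0..} \<inter> \<rat>. \<phi> t)"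
      unfolding eventually_at_filter by (rule always_eventually) (use t in \<open>auto intro!: SUP_upper\<close>)
    ultimately show "\<phi> t \<le> (SUP t\<in>{0..} \<inter> \<rat>. \<phi> t)"
      by (intro tendsto_upperbound)
  qed
qed (rule SUP_subset_mono; auto)

lemma abs_set_integral_atLeastAtMost_le:
  fixes \<phi> :: "real \<Rightarrow> real"
  assumes K: "\<And>s. \<bar>\<phi> s\<bar> \<le> K" and r: "0 \<le> r"
  shows "\<bar>LINT s:{0..r}|lborel. \<phi> s\<bar> \<le> K * r"
proof (cases "set_integrable lborel {0..r} \<phi>")
  case True
  have "\<bar>LINT s:{0..r}|lborel. \<phi> s\<bar> \<le> (LINT s:{0..r}|lborel. \<bar>\<phi> s\<bar>)"
    using set_integral_norm_bound[OF True] by simp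
  also have "\<dots> \<le> (LINT s:{0..r}|lborel. K)"
    using K by (intro set_integral_mono set_integrable_abs True borel_integrable_atLeastAtMost') auto
  also have "\<dots> = K * r"
    using r by (simp add: set_integral_const)
  finally show ?thesis .
next
  case False
  then have "(LINT s:{0..r}|lborel. \<phi> s) = 0"
    unfolding set_lebesgue_integral_def set_integrable_def by (rule not_integrable_integral_eq)
  then show ?thesis
    using K[of 0] r by simp
qed

definition reward :: "(real \<Rightarrow> 'w \<Rightarrow> 'e) \<Rightarrow> ('e \<Rightarrow> real) \<Rightarrow> ('e \<Rightarrow> real) \<Rightarrow> real \<Rightarrow> 'w \<Rightarrow> real" where
  "reward X f g t \<omega> = (LINT s:{0..t}|lborel. f (X s \<omega>)) + g (X t \<omega>)"

lemma borel_measurable_reward: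
  fixes X :: "real \<Rightarrow> 'w \<Rightarrow> 'e::metric_space"
  assumes X: "\<And>t. 0 \<le> t \<Longrightarrow> X t \<in> measurable M borel"
    and rc: "\<And>\<omega> t. \<omega> \<in> space M \<Longrightarrow> 0 \<le> t \<Longrightarrow> continuous (at_right t) (\<lambda>s. X s \<omega>)"
    and f: "continuous_on UNIV f" and g: "continuous_on UNIV g"
    and \<rho>[measurable]: "\<rho> \<in> borel_measurable M" and \<rho>_nonneg: "\<And>\<omega>. \<omega> \<in> space M \<Longrightarrow> 0 \<le> \<rho> \<omega>"
  shows "(\<lambda>\<omega>. reward X f g (\<rho> \<omega>) \<omega>) \<in> borel_measurable M"
proof -
  have XX[measurable]: "(\<lambda>p. X (max 0 (snd p)) (fst p)) \<in> measurable (M \<Otimes>\<^sub>M lborel) borel"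
    using measurable_right_continuous_process[OF X rc]
    by (simp add: measurable_cong_sets[OF sets_pair_measure_cong[OF refl sets_lborel] refl])
  have [measurable]: "Measurable.pred (M \<Otimes>\<^sub>M lborel) (\<lambda>p. snd p \<in> {0..\<rho> (fst p)})"
    unfolding atLeastAtMost_iff by measurable
  note [measurable] = borel_measurable_continuous_onI[OF f] borel_measurable_continuous_onI[OF g]
  have "(\<lambda>\<omega>. X (max 0 (\<rho> \<omega>)) \<omega>) \<in> borel_measurable M"
    by (rule measurable_compose[OF _ XX, of "\<lambda>\<omega>. (\<omega>, \<rho> \<omega>)", simplified]) measurable
  then have [measurable]: "(\<lambda>\<omega>. X (\<rho> \<omega>) \<omega>) \<in> borel_measurable M"
    by (rule measurable_cong[THEN iffD1, rotated]) (simp add: \<rho>_nonneg)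
  have "(\<lambda>\<omega>. \<integral>s. indicator {0..\<rho> \<omega>} s * f (X (max 0 s) \<omega>) \<partial>lborel) \<in> borel_measurable M"
    by (intro lborel.borel_measurable_lebesgue_integral) (simp add: case_prod_beta')
  moreover have "(\<integral>s. indicator {0..\<rho> \<omega>} s * f (X (max 0 s) \<omega>) \<partial>lborel) = (LINT s:{0..\<rho> \<omega>}|lborel. f (X s \<omega>))" for \<omega>
    unfolding set_lebesgue_integral_def
    by (intro Bochner_Integration.integral_cong) (auto simp: indicator_def)
  ultimately have [measurable]: "(\<lambda>\<omega>. LINT s:{0..\<rho> \<omega>}|lborel. f (X s \<omega>)) \<in> borel_measurable M"
    by simp
  show ?thesis
    unfolding reward_def by measurable
qed

lemma stop_min_eq_of_le: "\<tau> \<omega> \<le> ennreal T \<Longrightarrow> stop_min \<tau> T \<omega> = enn2real (\<tau> \<omega>)"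
  by (simp add: stop_min_def min_absorb1)

lemma stop_min_eq_of_less: "0 \<le> T \<Longrightarrow> ennreal T < \<tau> \<omega> \<Longrightarrow> stop_min \<tau> T \<omega> = T"
  by (simp add: stop_min_def min_absorb2)

lemma ennreal_stop_min_le: "ennreal (stop_min \<tau> T \<omega>) \<le> \<tau> \<omega>"
  by (simp add: stop_min_def ennreal_enn2real_if)

lemma eventually_le_ennreal_at_top: "x \<noteq> \<infinity> \<Longrightarrow> \<forall>\<^sub>F T in at_top. x \<le> ennreal T"
  using eventually_ge_at_top[of "enn2real x"]
proof eventually_elim
  case (elim T)
  have "ennreal (enn2real x) \<le> ennreal T"
    using elim(2) by (rule ennreal_leI)
  then show ?case
    using \<open>x \<noteq> \<infinity>\<close> by (simp add: ennreal_enn2real_if)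
qed

locale reward_process = prob_space M
  for M :: "'w measure" +
  fixes X :: "real \<Rightarrow> 'w \<Rightarrow> 'e::metric_space" and f g :: "'e \<Rightarrow> real" and K :: real
    and \<tau> :: "'w \<Rightarrow> ennreal"
  assumes X_measurable: "\<And>t. 0 \<le> t \<Longrightarrow> X t \<in> borel_measurable M"
    and right_continuous: "\<And>\<omega> t. \<omega> \<in> space M \<Longrightarrow> 0 \<le> t \<Longrightarrow> continuous (at_right t) (\<lambda>s. X s \<omega>)"
    and f_continuous: "continuous_on UNIV f" and f_bounded: "\<And>y. \<bar>f y\<bar> \<le> K"
    and g_continuous: "continuous_on UNIV g"
    and sup_g_pos_integrable: "(\<integral>\<^sup>+\<omega>. (SUP t\<in>{0..}. ennreal (max 0 (g (X t \<omega>)))) \<partial>M) < \<infinity>"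
    and \<tau>_measurable[measurable]: "\<tau> \<in> borel_measurable M"
    and \<tau>_integrable: "(\<integral>\<^sup>+\<omega>. \<tau> \<omega> \<partial>M) < \<infinity>"
begin

lemma K_nonneg: "0 \<le> K"
  using f_bounded[of undefined] by simp

lemma AE_\<tau>_finite: "AE \<omega> in M. \<tau> \<omega> \<noteq> \<infinity>"
  using nn_integral_PInf_AE[OF \<tau>_measurable] \<tau>_integrable by simp

lemma borel_measurable_stopped_reward[measurable]:
  "\<rho> \<in> borel_measurable M \<Longrightarrow> (\<lambda>\<omega>. reward X f g (enn2real (\<rho> \<omega>)) \<omega>) \<in> borel_measurable M"
  by (intro borel_measurable_reward[OF X_measurable right_continuous f_continuous g_continuous]) auto

lemma borel_measurable_sup_g_pos[measurable]:
  "(\<lambda>\<omega>. SUP t\<in>{0..}. ennreal (max 0 (g (X t \<omega>)))) \<in> borel_measurable M"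
proof -
  have "continuous (at_right t) (\<lambda>s. ennreal (max 0 (g (X s \<omega>))))"
    if "\<omega> \<in> space M" "0 \<le> t" for \<omega> t
    using right_continuous[OF that] g_continuous unfolding continuous_within
    by (intro tendsto_ennrealI tendsto_max tendsto_const isCont_tendsto_compose[of _ g])
      (auto simp: continuous_on_eq_continuous_at)
  then have Rats: "(SUP t\<in>{0..}. ennreal (max 0 (g (X t \<omega>)))) = (SUP t\<in>{0..} \<inter> \<rat>. ennreal (max 0 (g (X t \<omega>))))"
    if "\<omega> \<in> space M" for \<omega>
    using that by (intro SUP_nonneg_Rats_right_continuous)
  have "(\<lambda>\<omega>. SUP t\<in>{0..} \<inter> \<rat>. ennreal (max 0 (g (X t \<omega>)))) \<in> borel_measurable M"
  proof (rule borel_measurable_SUP)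
    fix t :: real assume "t \<in> {0..} \<inter> \<rat>"
    then have [measurable]: "X t \<in> borel_measurable M"
      by (intro X_measurable) auto
    note [measurable] = borel_measurable_continuous_onI[OF g_continuous]
    show "(\<lambda>\<omega>. ennreal (max 0 (g (X t \<omega>)))) \<in> borel_measurable M"
      by measurable
  qed (intro countable_Int2 countable_rat)
  then show ?thesis
    by (rule measurable_cong[THEN iffD1, rotated]) (rule Rats[symmetric])
qed

lemma borel_measurable_reward_stop_min[measurable]:
  "(\<lambda>\<omega>. reward X f g (stop_min \<tau> T \<omega>) \<omega>) \<in> borel_measurable M"
  unfolding stop_min_def by measurable

lemma AE_eventually_stop_min_eq: "AE \<omega> in M. \<forall>\<^sub>F T in at_top. stop_min \<tau> T \<omega> = enn2real (\<tau> \<omega>)"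
  using AE_\<tau>_finite
proof eventually_elim
  case (elim \<omega>)
  show ?case
    using eventually_le_ennreal_at_top[OF elim] by (rule eventually_mono) (rule stop_min_eq_of_le)
qed

lemma tendsto_nn_integral_tail:
  assumes [measurable]: "h \<in> borel_measurable M" and h: "(\<integral>\<^sup>+\<omega>. h \<omega> \<partial>M) < \<infinity>"
  shows "((\<lambda>T. \<integral>\<^sup>+\<omega>. h \<omega> * indicator {\<omega>\<in>space M. ennreal T < \<tau> \<omega>} \<omega> \<partial>M) \<longlongrightarrow> 0) at_top"
proof -
  have "((\<lambda>T. \<integral>\<^sup>+\<omega>. h \<omega> * indicator {\<omega>\<in>space M. ennreal T < \<tau> \<omega>} \<omega> \<partial>M) \<longlongrightarrow> (\<integral>\<^sup>+\<omega>. 0 \<partial>M)) at_top"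
  proof (rule nn_integral_dominated_convergence_at_top[OF _ _ _ _ h])
    show "AE \<omega> in M. ((\<lambda>T. h \<omega> * indicator {\<omega>\<in>space M. ennreal T < \<tau> \<omega>} \<omega>) \<longlongrightarrow> 0) at_top"
      using AE_\<tau>_finite
    proof eventually_elim
      case (elim \<omega>)
      show ?case
        by (rule tendsto_eventually, rule eventually_mono[OF eventually_le_ennreal_at_top[OF elim]])
          (auto simp: not_less[symmetric])
    qed
  qed (auto simp: indicator_def)
  then show ?thesis
    by simp
qed

lemma tendsto_prob_tail: "((\<lambda>T. prob {\<omega>\<in>space M. ennreal T < \<tau> \<omega>}) \<longlongrightarrow> 0) at_top"
proof -
  have "((\<lambda>T. emeasure M {\<omega>\<in>space M. ennreal T < \<tau> \<omega>}) \<longlongrightarrow> 0) at_top"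
    using tendsto_nn_integral_tail[of "\<lambda>_. 1"] by (simp add: emeasure_space_1)
  then show ?thesis
    by (simp add: emeasure_eq_measure tendsto_ennreal_iff[where x=0, simplified])
qed

lemma abs_reward_sub_le: "0 \<le> r \<Longrightarrow> \<bar>reward X f g r \<omega> - g (X r \<omega>)\<bar> \<le> K * r"
  unfolding reward_def using f_bounded by (simp add: abs_set_integral_atLeastAtMost_le)

lemma ennreal_K_mult_le: "0 \<le> r \<Longrightarrow> ennreal r \<le> x \<Longrightarrow> ennreal (K * r) \<le> ennreal K * x"
  using K_nonneg by (simp add: ennreal_mult mult_left_mono)

lemma ennreal_reward_le:
  assumes "0 \<le> r" "ennreal r \<le> \<tau> \<omega>"
  shows "ennreal (reward X f g r \<omega>) \<le> ennreal K * \<tau> \<omega> + (SUP t\<in>{0..}. ennreal (max 0 (g (X t \<omega>))))"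
proof -
  have "reward X f g r \<omega> \<le> K * r + max 0 (g (X r \<omega>))"
    using abs_reward_sub_le[OF assms(1), of \<omega>] by linarith
  then have "ennreal (reward X f g r \<omega>) \<le> ennreal (K * r + max 0 (g (X r \<omega>)))"
    by (rule ennreal_leI)
  also have "\<dots> = ennreal (K * r) + ennreal (max 0 (g (X r \<omega>)))"
    using K_nonneg assms(1) by (intro ennreal_plus) auto
  also have "\<dots> \<le> ennreal K * \<tau> \<omega> + (SUP t\<in>{0..}. ennreal (max 0 (g (X t \<omega>))))"
    using assms by (intro add_mono ennreal_K_mult_le SUP_upper2[of r]) auto
  finally show ?thesis .
qed

lemma ennreal_neg_reward_le:
  assumes "0 \<le> r" "ennreal r \<le> \<tau> \<omega>"
  shows "ennreal (- reward X f g r \<omega>) \<le> ennreal K * \<tau> \<omega> + ennreal (max 0 (- g (X r \<omega>)))"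
proof -
  have "- reward X f g r \<omega> \<le> K * r + max 0 (- g (X r \<omega>))"
    using abs_reward_sub_le[OF assms(1), of \<omega>] by linarith
  then have "ennreal (- reward X f g r \<omega>) \<le> ennreal (K * r + max 0 (- g (X r \<omega>)))"
    by (rule ennreal_leI)
  also have "\<dots> = ennreal (K * r) + ennreal (max 0 (- g (X r \<omega>)))"
    using K_nonneg assms(1) by (intro ennreal_plus) auto
  also have "\<dots> \<le> ennreal K * \<tau> \<omega> + ennreal (max 0 (- g (X r \<omega>)))"
    using assms by (intro add_mono ennreal_K_mult_le) auto
  finally show ?thesis .
qed

lemma reward_bound_integrable:
  "(\<integral>\<^sup>+\<omega>. ennreal K * \<tau> \<omega> + (SUP t\<in>{0..}. ennreal (max 0 (g (X t \<omega>)))) \<partial>M) < \<infinity>"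
  using \<tau>_integrable sup_g_pos_integrable borel_measurable_sup_g_pos
  by (simp add: nn_integral_add nn_integral_cmult ennreal_mult_less_top)

lemma tendsto_nn_integral_reward:
  "((\<lambda>T. \<integral>\<^sup>+\<omega>. ennreal (reward X f g (stop_min \<tau> T \<omega>) \<omega>) \<partial>M)
     \<longlongrightarrow> (\<integral>\<^sup>+\<omega>. ennreal (reward X f g (enn2real (\<tau> \<omega>)) \<omega>) \<partial>M)) at_top"
proof (rule nn_integral_dominated_convergence_at_top)
  show "(\<integral>\<^sup>+\<omega>. ennreal K * \<tau> \<omega> + (SUP t\<in>{0..}. ennreal (max 0 (g (X t \<omega>)))) \<partial>M) < \<infinity>"
    by (rule reward_bound_integrable)
  show "AE \<omega> in M. ennreal (reward X f g (stop_min \<tau> T \<omega>) \<omega>)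
      \<le> ennreal K * \<tau> \<omega> + (SUP t\<in>{0..}. ennreal (max 0 (g (X t \<omega>))))" for T
    by (intro AE_I2 ennreal_reward_le ennreal_stop_min_le) (simp add: stop_min_def)
  show "AE \<omega> in M. ((\<lambda>T. ennreal (reward X f g (stop_min \<tau> T \<omega>) \<omega>))
      \<longlongrightarrow> ennreal (reward X f g (enn2real (\<tau> \<omega>)) \<omega>)) at_top"
    using AE_eventually_stop_min_eq by eventually_elim (rule tendsto_eventually, auto elim: eventually_mono)
qed measurable

lemma nn_integral_reward_finite:
  "(\<integral>\<^sup>+\<omega>. ennreal (reward X f g (enn2real (\<tau> \<omega>)) \<omega>) \<partial>M) < \<infinity>"
proof -
  have "(\<integral>\<^sup>+\<omega>. ennreal (reward X f g (enn2real (\<tau> \<omega>)) \<omega>) \<partial>M)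
      \<le> (\<integral>\<^sup>+\<omega>. ennreal K * \<tau> \<omega> + (SUP t\<in>{0..}. ennreal (max 0 (g (X t \<omega>)))) \<partial>M)"
    by (intro nn_integral_mono ennreal_reward_le) (simp_all add: ennreal_enn2real_if)
  also have "\<dots> < \<infinity>"
    by (rule reward_bound_integrable)
  finally show ?thesis .
qed

lemma tendsto_nn_integral_neg_reward:
  assumes tail: "((\<lambda>T. \<integral>\<^sup>+\<omega>. indicator {\<omega>\<in>space M. ennreal T < \<tau> \<omega>} \<omega> * ennreal (max 0 (- g (X T \<omega>))) \<partial>M)
      \<longlongrightarrow> 0) at_top"
  shows "((\<lambda>T. \<integral>\<^sup>+\<omega>. ennreal (- reward X f g (stop_min \<tau> T \<omega>) \<omega>) \<partial>M)
     \<longlongrightarrow> (\<integral>\<^sup>+\<omega>. ennreal (- reward X f g (enn2real (\<tau> \<omega>)) \<omega>) \<partial>M)) at_top"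
proof -
  define Y where "Y T \<omega> = ennreal (- reward X f g (stop_min \<tau> T \<omega>) \<omega>)" for T \<omega>
  define Y\<^sub>\<tau> where "Y\<^sub>\<tau> \<omega> = ennreal (- reward X f g (enn2real (\<tau> \<omega>)) \<omega>)" for \<omega>
  define late where "late T = {\<omega>\<in>space M. ennreal T < \<tau> \<omega>}" for T
  have [measurable]: "Y T \<in> borel_measurable M" "Y\<^sub>\<tau> \<in> borel_measurable M" "late T \<in> sets M" for T
    unfolding Y_def Y\<^sub>\<tau>_def late_def by measurable
  have split: "(\<integral>\<^sup>+\<omega>. Y T \<omega> \<partial>M)
      = (\<integral>\<^sup>+\<omega>. Y\<^sub>\<tau> \<omega> * indicator (space M - late T) \<omega> \<partial>M) + (\<integral>\<^sup>+\<omega>. Y T \<omega> * indicator (late T) \<omega> \<partial>M)" for T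
  proof -
    have "(\<integral>\<^sup>+\<omega>. Y T \<omega> \<partial>M)
        = (\<integral>\<^sup>+\<omega>. Y\<^sub>\<tau> \<omega> * indicator (space M - late T) \<omega> + Y T \<omega> * indicator (late T) \<omega> \<partial>M)"
      by (intro nn_integral_cong) (auto simp: Y_def Y\<^sub>\<tau>_def late_def indicator_def stop_min_eq_of_le not_less)
    also have "\<dots> = (\<integral>\<^sup>+\<omega>. Y\<^sub>\<tau> \<omega> * indicator (space M - late T) \<omega> \<partial>M) + (\<integral>\<^sup>+\<omega>. Y T \<omega> * indicator (late T) \<omega> \<partial>M)"
      by (intro nn_integral_add) measurable
    finally show ?thesis .
  qed
  have "((\<lambda>T. \<integral>\<^sup>+\<omega>. Y\<^sub>\<tau> \<omega> * indicator (space M - late T) \<omega> \<partial>M) \<longlongrightarrow> (\<integral>\<^sup>+\<omega>. Y\<^sub>\<tau> \<omega> \<partial>M)) at_top"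
  proof (rule nn_integral_tendsto_at_top_of_le_limit)
    show "AE \<omega> in M. ((\<lambda>T. Y\<^sub>\<tau> \<omega> * indicator (space M - late T) \<omega>) \<longlongrightarrow> Y\<^sub>\<tau> \<omega>) at_top"
      using AE_\<tau>_finite AE_space
    proof eventually_elim
      case (elim \<omega>)
      show ?case
        by (rule tendsto_eventually, rule eventually_mono[OF eventually_le_ennreal_at_top[OF elim(1)]])
          (use elim(2) in \<open>auto simp: late_def not_less[symmetric]\<close>)
    qed
  qed (auto intro!: AE_I2 mult_left_le simp: indicator_def)
  moreover have "((\<lambda>T. \<integral>\<^sup>+\<omega>. Y T \<omega> * indicator (late T) \<omega> \<partial>M) \<longlongrightarrow> 0) at_top"
  proof (rule tendsto_sandwich[OF _ _ tendsto_const])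
    show "\<forall>\<^sub>F T in at_top. (\<integral>\<^sup>+\<omega>. Y T \<omega> * indicator (late T) \<omega> \<partial>M)
        \<le> (\<integral>\<^sup>+\<omega>. ennreal K * \<tau> \<omega> * indicator (late T) \<omega> \<partial>M)
          + (\<integral>\<^sup>+\<omega>. indicator (late T) \<omega> * ennreal (max 0 (- g (X T \<omega>))) \<partial>M)"
      using eventually_ge_at_top[of 0]
    proof eventually_elim
      case (elim T)
      note [measurable] = X_measurable[OF elim] borel_measurable_continuous_onI[OF g_continuous]
      have "(\<integral>\<^sup>+\<omega>. Y T \<omega> * indicator (late T) \<omega> \<partial>M)
          \<le> (\<integral>\<^sup>+\<omega>. ennreal K * \<tau> \<omega> * indicator (late T) \<omega>
                + indicator (late T) \<omega> * ennreal (max 0 (- g (X T \<omega>))) \<partial>M)"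
        using elim ennreal_neg_reward_le[OF elim]
        by (intro nn_integral_mono) (auto simp: Y_def late_def stop_min_eq_of_less indicator_def)
      also have "\<dots> = (\<integral>\<^sup>+\<omega>. ennreal K * \<tau> \<omega> * indicator (late T) \<omega> \<partial>M)
          + (\<integral>\<^sup>+\<omega>. indicator (late T) \<omega> * ennreal (max 0 (- g (X T \<omega>))) \<partial>M)"
        by (intro nn_integral_add) measurable
      finally show ?case .
    qed
    show "((\<lambda>T. (\<integral>\<^sup>+\<omega>. ennreal K * \<tau> \<omega> * indicator (late T) \<omega> \<partial>M)
          + (\<integral>\<^sup>+\<omega>. indicator (late T) \<omega> * ennreal (max 0 (- g (X T \<omega>))) \<partial>M)) \<longlongrightarrow> 0) at_top"
      using tendsto_add[OF tendsto_nn_integral_tail[of "\<lambda>\<omega>. ennreal K * \<tau> \<omega>"] tail]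
      using \<tau>_integrable by (simp add: late_def nn_integral_cmult ennreal_mult_less_top)
  qed simp
  ultimately show ?thesis
    using tendsto_add unfolding Y_def[symmetric] Y\<^sub>\<tau>_def[symmetric] split by fastforce
qed

lemma tendsto_ext_expectation_reward:
  assumes tail: "((\<lambda>T. \<integral>\<^sup>+\<omega>. indicator {\<omega>\<in>space M. ennreal T < \<tau> \<omega>} \<omega> * ennreal (max 0 (- g (X T \<omega>))) \<partial>M)
      \<longlongrightarrow> 0) at_top"
  shows "((\<lambda>T. ext_expectation M (\<lambda>\<omega>. reward X f g (stop_min \<tau> T \<omega>) \<omega>))
     \<longlongrightarrow> ext_expectation M (\<lambda>\<omega>. reward X f g (enn2real (\<tau> \<omega>)) \<omega>)) at_top"
  unfolding ext_expectation_def using nn_integral_reward_finite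
  by (intro tendsto_diff_ereal_general tendsto_enn2erealI tendsto_nn_integral_reward
      tendsto_nn_integral_neg_reward[OF tail]) auto

end

lemma filtered_spaceD:
  assumes "filtered_space M F" "0 \<le> t"
  shows "space (F t) = space M" "sets (F t) \<subseteq> sets M"
  using assms unfolding filtered_space_def by blast+

lemma borel_measurable_stopping_time_wrt:
  assumes "filtered_space M F" "stopping_time_wrt M F \<tau>"
  shows "\<tau> \<in> borel_measurable M"
proof (rule borel_measurableI_le)
  fix y :: ennreal
  show "{\<omega> \<in> space M. \<tau> \<omega> \<le> y} \<in> sets M"
  proof (cases y)
    case (real r)
    then have "{\<omega> \<in> space M. \<tau> \<omega> \<le> y} \<in> sets (F r)"
      using assms(2) unfolding stopping_time_wrt_def by auto
    then show ?thesis
      using filtered_spaceD[OF assms(1) \<open>0 \<le> r\<close>] by blast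
  qed simp
qed

lemma stopping_time_wrt_tail_sets:
  assumes "filtered_space M F" "stopping_time_wrt M F \<tau>" "0 \<le> T"
  shows "{\<omega>\<in>space M. ennreal T < \<tau> \<omega>} \<in> sets (F T)"
proof -
  have "space (F T) = space M"
    using filtered_spaceD[OF assms(1,3)] by blast
  then have "{\<omega>\<in>space M. ennreal T < \<tau> \<omega>} = space (F T) - {\<omega>\<in>space M. \<tau> \<omega> \<le> ennreal T}"
    by auto
  also have "\<dots> \<in> sets (F T)"
    using assms(2,3) unfolding stopping_time_wrt_def by auto
  finally show ?thesis .
qed

lemma markov_processD:
  assumes "markov_process M F P X"
  shows "filtered_space M F" "prob_space (P x)" "sets (P x) = sets M"
    and "0 \<le> t \<Longrightarrow> X t \<in> measurable (F t) borel"
    and "\<omega> \<in> space M \<Longrightarrow> 0 \<le> t \<Longrightarrow> continuous (at_right t) (\<lambda>s. X s \<omega>)"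
  using assms unfolding markov_process_def by simp_all

lemma reward_process_of_markov_process:
  assumes markov: "markov_process M F P X" and stop: "stopping_time_wrt M F \<tau>"
    and "continuous_on UNIV f" "\<And>y. \<bar>f y\<bar> \<le> K" "continuous_on UNIV g"
    and "(\<integral>\<^sup>+\<omega>. (SUP t\<in>{0..}. ennreal (max 0 (g (X t \<omega>)))) \<partial>P x) < \<infinity>"
    and "(\<integral>\<^sup>+\<omega>. \<tau> \<omega> \<partial>P x) < \<infinity>"
  shows "reward_process (P x) X f g K \<tau>"
proof -
  have filtered: "filtered_space M F" and P: "prob_space (P x)" "sets (P x) = sets M"
    and X_F: "\<And>t. 0 \<le> t \<Longrightarrow> X t \<in> measurable (F t) borel"
    and rc: "\<And>\<omega> t. \<omega> \<in> space M \<Longrightarrow> 0 \<le> t \<Longrightarrow> continuous (at_right t) (\<lambda>s. X s \<omega>)"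
    using markov_processD[OF markov] by blast+
  have space_P: "space (P x) = space M"
    using P(2) by (rule sets_eq_imp_space_eq)
  then have "\<And>\<omega> t. \<omega> \<in> space (P x) \<Longrightarrow> 0 \<le> t \<Longrightarrow> continuous (at_right t) (\<lambda>s. X s \<omega>)"
    using rc by simp
  moreover have "X t \<in> borel_measurable (P x)" if "0 \<le> t" for t
  proof (rule measurable_from_subalg)
    show "subalgebra (P x) (F t)"
      using filtered_spaceD[OF filtered that] P(2) space_P by (simp add: subalgebra_def)
  qed (rule X_F[OF that])
  moreover have "\<tau> \<in> borel_measurable (P x)"
    unfolding measurable_cong_sets[OF P(2) refl] by (rule borel_measurable_stopping_time_wrt[OF filtered stop])
  ultimately show ?thesis
    using P(1) assms(3-7) by (intro reward_process.intro reward_process_axioms.intro)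
qed

theorem mainTheorem8:
  fixes M :: "'w measure" and F :: "real \<Rightarrow> 'w measure"
    and P :: "'e::metric_space \<Rightarrow> 'w measure" and X :: "real \<Rightarrow> 'w \<Rightarrow> 'e"
    and f g :: "'e \<Rightarrow> real" and \<tau> :: "'w \<Rightarrow> ennreal" and x :: 'e
  assumes loc_compact: "locally compact (UNIV :: 'e set)"
    and markov: "markov_process M F P X"
    and f_cont: "continuous_on UNIV f" and f_bdd: "bounded (range f)"
    and g_cont: "continuous_on UNIV g"
    and C1: "\<forall>y. (\<integral>\<^sup>+\<omega>. (SUP t\<in>{0..}. ennreal (max 0 (g (X t \<omega>)))) \<partial>P y) < \<infinity>"
    and C2: "\<forall>y. \<forall>A :: real \<Rightarrow> 'w set. (\<forall>T>0. A T \<in> sets (F T)) \<longrightarrow>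
               ((\<lambda>T. measure (P y) (A T)) \<longlongrightarrow> 0) at_top \<longrightarrow>
               ((\<lambda>T. \<integral>\<^sup>+\<omega>. indicator (A T) \<omega> * ennreal (max 0 (- g (X T \<omega>))) \<partial>P y) \<longlongrightarrow> 0) at_top"
    and stop: "stopping_time_wrt M F \<tau>"
    and tau_int: "(\<integral>\<^sup>+\<omega>. \<tau> \<omega> \<partial>P x) < \<infinity>"
  shows "((\<lambda>T. ext_expectation (P x)
             (\<lambda>\<omega>. (LINT s:{0..stop_min \<tau> T \<omega>}|lborel. f (X s \<omega>)) + g (X (stop_min \<tau> T \<omega>) \<omega>)))
          \<longlongrightarrow> ext_expectation (P x)
             (\<lambda>\<omega>. (LINT s:{0..enn2real (\<tau> \<omega>)}|lborel. f (X s \<omega>)) + g (X (enn2real (\<tau> \<omega>)) \<omega>))) at_top"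
proof -
  obtain K where K: "\<And>y. \<bar>f y\<bar> \<le> K"
    using f_bdd by (auto simp: bounded_iff)
  interpret reward_process "P x" X f g K \<tau>
    by (rule reward_process_of_markov_process[OF markov stop f_cont K g_cont C1[rule_format] tau_int])
  have filtered: "filtered_space M F" and "sets (P x) = sets M"
    using markov_processD[OF markov] by blast+
  then have "space (P x) = space M"
    by (intro sets_eq_imp_space_eq)
  with filtered have "{\<omega>\<in>space (P x). ennreal T < \<tau> \<omega>} \<in> sets (F T)" if "0 < T" for T
    using stopping_time_wrt_tail_sets[OF _ stop] that by simp
  then have "((\<lambda>T. \<integral>\<^sup>+\<omega>. indicator {\<omega>\<in>space (P x). ennreal T < \<tau> \<omega>} \<omega> * ennreal (max 0 (- g (X T \<omega>))) \<partial>P x)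
      \<longlongrightarrow> 0) at_top"
    using tendsto_prob_tail by (intro C2[rule_format]) simp_all
  from tendsto_ext_expectation_reward[OF this] show ?thesis
    unfolding reward_def .
qed

end
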